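(* In the fixed-flow two-parallel-path setting with $l_{P_1}<l_{P_2}$, and with initial flows at vertices other than $s,d$ satisfying $f_v(0)\le\bar f$, $b_v(0)\le\bar b$, let $T_1=\max_{(u,v)\in E}\log(p_{uv}(0)/(\bar f+\bar b))/\log(1/\delta)$. Then for every integer $t\ge L+\max(0,T_1)$, $$r_{ss_1}(t+1)\ \ge\ r_{\min}(t)\left(1+\frac{\alpha-\beta}{C+\beta}\right),\qquad \alpha=1-l_{P_1},\ \beta=1-l_{P_2},\ C=\frac{5(\bar f+\bar b)}{\bar b(1-\delta)}.$$
   Context: Model (linear decision rule). Directed graph $G=(V,E)$, source $s$, destination $d$, discrete time; pheromone $p_{uv}(t)$, forward flows $f_v(t)$, backward flows $b_v(t)$; leakages $l_v\in[0,1]$; decay $\delta\in(0,1)$; exogenous inputs $f_s(t),b_d(t)$. Edge flows: $f_{uv}(t)=f_u(t)p_{uv}(t)/\sum_{z:(u,z)\in E}p_{uz}(t)$, $b_{uv}(t)=b_v(t)p_{uv}(t)/\sum_{z:(z,v)\in E}p_{zv}(t)$ (at a vertex with a single outgoing, resp. incoming, edge the whole flow goes along it). Updates: $f_v(t+1)=(1-l_v)\sum_{z:(z,v)\in E}f_{zv}(t)$ for $v\neq s$, $b_u(t+1)=(1-l_u)\sum_{z:(u,z)\in E}b_{uz}(t)$ for $u\ne d$, $p_{uv}(t+1)=\delta(p_{uv}(t)+f_{uv}(t)+b_{uv}(t))$. Path leakage $l_P=1-\prod_{v\in P\setminus\{s,d\}}(1-l_v)$. Two parallel paths: $G$ is the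 union of directed paths $P_1,P_2$ from $s$ to $d$ sharing only $s,d$; $s_1,s_2$ are the successors of $s$ and $d_1,d_2$ the predecessors of $d$ on $P_1,P_2$; $m=\mathrm{len}(P_1)$, $n=\mathrm{len}(P_2)$ (numbers of edges), $L=\max(m,n)$. Potential: $r_{ss_1}(t)=p_{ss_1}(t)/p_{ss_2}(t)$, $r_{d_1d}(t)=p_{d_1d}(t)/p_{d_2d}(t)$, and for $t\ge L$, $r_{\min}(t)=\min\{r_{ss_1}(t-i),\,r_{d_1d}(t-i):0\le i\le L-1\}$. Fixed-flow setting: $f_s(t)=\bar f>0$ and $b_d(t)=\bar b>0$ for all $t$, and all initial pheromone levels $p_{uv}(0)$ are positive. *)

theory Defs
  imports Complex_Main
begin

text \<open>Vertices of the two-parallel-path graph: source, destination, the internal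
  vertices V1 k (0 < k < m) of P1 and V2 k (0 < k < n) of P2.\<close>
datatype vtx = Src | Dst | V1 nat | V2 nat

definition pv1 :: "nat \<Rightarrow> nat \<Rightarrow> vtx" where
  "pv1 m k = (if k = 0 then Src else if k = m then Dst else V1 k)"

definition pv2 :: "nat \<Rightarrow> nat \<Rightarrow> vtx" where
  "pv2 n k = (if k = 0 then Src else if k = n then Dst else V2 k)"

definition edges2 :: "nat \<Rightarrow> nat \<Rightarrow> (vtx \<times> vtx) set" where
  "edges2 m n = {(pv1 m k, pv1 m (Suc k)) | k. k < m} \<union> {(pv2 n k, pv2 n (Suc k)) | k. k < n}"

definition verts :: "(vtx \<times> vtx) set \<Rightarrow> vtx set" where
  "verts E = fst ` E \<union> snd ` E"

definition fedge :: "(vtx \<times> vtx) set \<Rightarrow> (vtx \<Rightarrow> vtx \<Rightarrow> real) \<Rightarrow> (vtx \<Rightarrow> real) \<Rightarrow> vtx \<Rightarrow> vtx \<Rightarrow> real" where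
  "fedge E p f u v = f u * p u v / (\<Sum>z\<in>{z. (u, z) \<in> E}. p u z)"

definition bedge :: "(vtx \<times> vtx) set \<Rightarrow> (vtx \<Rightarrow> vtx \<Rightarrow> real) \<Rightarrow> (vtx \<Rightarrow> real) \<Rightarrow> vtx \<Rightarrow> vtx \<Rightarrow> real" where
  "bedge E p b u v = b v * p u v / (\<Sum>z\<in>{z. (z, v) \<in> E}. p z v)"

definition ant_dynamics ::
  "(vtx \<times> vtx) set \<Rightarrow> vtx \<Rightarrow> vtx \<Rightarrow> (vtx \<Rightarrow> real) \<Rightarrow> real \<Rightarrow> (nat \<Rightarrow> real) \<Rightarrow> (nat \<Rightarrow> real)
   \<Rightarrow> (nat \<Rightarrow> vtx \<Rightarrow> vtx \<Rightarrow> real) \<Rightarrow> (nat \<Rightarrow> vtx \<Rightarrow> real) \<Rightarrow> (nat \<Rightarrow> vtx \<Rightarrow> real) \<Rightarrow> bool" where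
  "ant_dynamics E s d l \<delta> fs bd p f b \<longleftrightarrow>
     (\<forall>t. f t s = fs t) \<and> (\<forall>t. b t d = bd t) \<and>
     (\<forall>t. \<forall>v\<in>verts E. v \<noteq> s \<longrightarrow>
        f (Suc t) v = (1 - l v) * (\<Sum>z\<in>{z. (z, v) \<in> E}. fedge E (p t) (f t) z v)) \<and>
     (\<forall>t. \<forall>u\<in>verts E. u \<noteq> d \<longrightarrow>
        b (Suc t) u = (1 - l u) * (\<Sum>z\<in>{z. (u, z) \<in> E}. bedge E (p t) (b t) u z)) \<and>
     (\<forall>t. \<forall>(u, v)\<in>E.
        p (Suc t) u v = \<delta> * (p t u v + fedge E (p t) (f t) u v + bedge E (p t) (b t) u v))"

definition leak1 :: "nat \<Rightarrow> (vtx \<Rightarrow> real) \<Rightarrow> real" where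
  "leak1 m l = 1 - (\<Prod>k\<in>{0<..<m}. (1 - l (V1 k)))"

definition leak2 :: "nat \<Rightarrow> (vtx \<Rightarrow> real) \<Rightarrow> real" where
  "leak2 n l = 1 - (\<Prod>k\<in>{0<..<n}. (1 - l (V2 k)))"

definition r_s1 :: "nat \<Rightarrow> nat \<Rightarrow> (nat \<Rightarrow> vtx \<Rightarrow> vtx \<Rightarrow> real) \<Rightarrow> nat \<Rightarrow> real" where
  "r_s1 m n p t = p t Src (pv1 m 1) / p t Src (pv2 n 1)"

definition r_d1 :: "nat \<Rightarrow> nat \<Rightarrow> (nat \<Rightarrow> vtx \<Rightarrow> vtx \<Rightarrow> real) \<Rightarrow> nat \<Rightarrow> real" where
  "r_d1 m n p t = p t (pv1 m (m - 1)) Dst / p t (pv2 n (n - 1)) Dst"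

definition r_min :: "nat \<Rightarrow> nat \<Rightarrow> (nat \<Rightarrow> vtx \<Rightarrow> vtx \<Rightarrow> real) \<Rightarrow> nat \<Rightarrow> real" where
  "r_min m n p t = Min ((\<lambda>i. r_s1 m n p (t - i)) ` {..<max m n} \<union> (\<lambda>i. r_d1 m n p (t - i)) ` {..<max m n})"

end

theory Submission
  imports Defs
begin

text \<open>Internal vertices of a path have a single in- and out-edge, so the backward flow leaving
  s along P_i at time t is the backward flow that d sent into P_i len(P_i) - 1 steps earlier,
  damped by 1 - l_P_i; and d splits its input in proportion to the pheromone on its two in-edges.
  Hence the deposits on (s,s_1) and (s,s_2) are in ratio at least alpha r_min : beta, while the
  forward flow from s is split in the current ratio, which is at least r_min. The gain is diluted
  by the pheromone already on the two source edges; their total x obeys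
  x(t+1) \<le> delta x(t) + 2 (fbar + bbar), and for t \<ge> T_1 the initial contribution has decayed
  below fbar + bbar. This bounds the dilution by the constant C.\<close>

lemma geometric_recurrence_bound:
  fixes x :: "nat \<Rightarrow> real" and \<delta> c :: real
  assumes "0 \<le> \<delta>" "\<delta> < 1" "0 \<le> c" and step: "\<And>t. x (Suc t) \<le> \<delta> * x t + c"
  shows "x t \<le> \<delta> ^ t * x 0 + c / (1 - \<delta>)"
proof (induction t)
  case 0
  then show ?case using assms by simp
next
  case (Suc t)
  have "x (Suc t) \<le> \<delta> * (\<delta> ^ t * x 0 + c / (1 - \<delta>)) + c"
    using step[of t] Suc assms(1) by (smt (verit) mult_left_mono)
  also have "\<dots> = \<delta> ^ Suc t * x 0 + c / (1 - \<delta>)"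
    using assms(2) by (simp add: field_simps)
  finally show ?case .
qed

lemma power_mult_le_of_log_bound:
  fixes \<delta> x F :: real
  assumes "0 < \<delta>" "\<delta> < 1" "0 < x" "0 < F" "ln (x / F) / ln (1 / \<delta>) \<le> real t"
  shows "\<delta> ^ t * x \<le> F"
proof -
  have "ln (x / F) \<le> real t * ln (1 / \<delta>)"
    using assms by (simp add: divide_le_eq)
  also have "\<dots> = ln ((1 / \<delta>) ^ t)"
    using assms(1) by (simp add: ln_realpow)
  finally have "x / F \<le> (1 / \<delta>) ^ t"
    using assms by (simp add: ln_le_cancel_iff)
  then show ?thesis
    using assms by (simp add: field_simps power_one_over)
qed

lemma share_bounds_of_ratio_ge:
  fixes a c R :: real
  assumes "0 < a" "0 < c" "0 < R" "R \<le> a / c"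
  shows "R / (1 + R) \<le> a / (a + c)" and "c / (a + c) \<le> 1 / (1 + R)"
proof -
  have "R * c \<le> a" using assms by (simp add: pos_le_divide_eq)
  then show "R / (1 + R) \<le> a / (a + c)" and "c / (a + c) \<le> 1 / (1 + R)"
    using assms by (simp_all add: divide_simps algebra_simps)
qed

lemma ratio_gain_le:
  fixes A k C \<alpha> \<beta> :: real
  assumes "0 < A" "0 < k" "0 \<le> \<beta>" "\<beta> < \<alpha>" "A \<le> C * k"
  shows "1 + (\<alpha> - \<beta>) / (C + \<beta>) \<le> (A + \<alpha> * k) / (A + \<beta> * k)"
proof -
  have den: "0 < A + \<beta> * k" using assms by (simp add: add_pos_nonneg)
  have "A + \<beta> * k \<le> (C + \<beta>) * k" using assms(5) by (simp add: ring_distribs)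
  have "(\<alpha> - \<beta>) / (C + \<beta>) = (\<alpha> - \<beta>) * k / ((C + \<beta>) * k)"
    using assms(2) by simp
  also have "\<dots> \<le> (\<alpha> - \<beta>) * k / (A + \<beta> * k)"
    using assms den \<open>A + \<beta> * k \<le> (C + \<beta>) * k\<close> by (intro divide_left_mono) auto
  also have "1 + \<dots> = (A + \<alpha> * k) / (A + \<beta> * k)"
    using den by (simp add: field_simps)
  finally show ?thesis by simp
qed

lemma pheromone_ratio_gain:
  fixes p1 p2 R X1 X2 fbar bbar \<alpha> \<beta> C :: real
  assumes "0 < p1" "0 < p2" "0 < R" "R * p2 \<le> p1"
    and "R / (1 + R) \<le> X1" "0 \<le> X2" "X2 \<le> 1 / (1 + R)"
    and "0 < fbar" "0 < bbar" "0 \<le> \<beta>" "\<beta> < \<alpha>" "p1 + p2 + fbar \<le> C * bbar"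
  shows "R * (1 + (\<alpha> - \<beta>) / (C + \<beta>))
    \<le> (p1 + fbar * p1 / (p1 + p2) + \<alpha> * bbar * X1) / (p2 + fbar * p2 / (p1 + p2) + \<beta> * bbar * X2)"
proof -
  define A where "A = p2 + fbar * p2 / (p1 + p2)"
  define k where "k = bbar / (1 + R)"
  have A_pos: "0 < A" and k_pos: "0 < k"
    using assms by (simp_all add: A_def k_def add_pos_nonneg)
  have "R * (fbar * p2 / (p1 + p2)) \<le> fbar * p1 / (p1 + p2)"
    using assms by (simp add: divide_right_mono mult_left_mono)
  moreover have "R * (\<alpha> * k) \<le> \<alpha> * bbar * X1"
    using assms mult_left_mono[OF assms(5), of "\<alpha> * bbar"] by (simp add: k_def mult.commute)
  ultimately have num: "R * (A + \<alpha> * k) \<le> p1 + fbar * p1 / (p1 + p2) + \<alpha> * bbar * X1"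
    using assms(4) by (simp add: A_def ring_distribs)
  have "\<beta> * bbar * X2 \<le> \<beta> * k"
    using assms mult_left_mono[OF assms(7), of "\<beta> * bbar"] by (simp add: k_def)
  then have den: "p2 + fbar * p2 / (p1 + p2) + \<beta> * bbar * X2 \<le> A + \<beta> * k"
    by (simp add: A_def)
  have den_pos: "0 < p2 + fbar * p2 / (p1 + p2) + \<beta> * bbar * X2"
    using assms by (simp add: add_pos_nonneg)
  have "A * (1 + R) = (p2 + R * p2) * (p1 + p2 + fbar) / (p1 + p2)"
    using assms by (simp add: A_def field_simps)
  also have "\<dots> \<le> (p1 + p2) * (p1 + p2 + fbar) / (p1 + p2)"
    using assms by (intro divide_right_mono mult_right_mono) auto
  also have "\<dots> \<le> C * bbar"
    using assms by simp
  finally have "A \<le> C * k"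
    using assms(3) by (simp add: k_def field_simps)
  from ratio_gain_le[OF A_pos k_pos assms(10,11) this]
  have "R * (1 + (\<alpha> - \<beta>) / (C + \<beta>)) \<le> R * (A + \<alpha> * k) / (A + \<beta> * k)"
    using mult_left_mono[of _ _ R] assms(3) by fastforce
  also have "\<dots> \<le> R * (A + \<alpha> * k) / (p2 + fbar * p2 / (p1 + p2) + \<beta> * bbar * X2)"
    using den den_pos assms A_pos k_pos by (intro divide_left_mono) (auto intro!: add_nonneg_nonneg)
  also have "\<dots> \<le> (p1 + fbar * p1 / (p1 + p2) + \<alpha> * bbar * X1) / (p2 + fbar * p2 / (p1 + p2) + \<beta> * bbar * X2)"
    using num den_pos by (intro divide_right_mono) auto
  finally show ?thesis .
qed

lemma bedge_single_in:
  assumes "{z. (z, v) \<in> E} = {u}" "p u v \<noteq> 0"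
  shows "bedge E p b u v = b v"
  using assms by (simp add: bedge_def)

lemma backward_flow_single_out:
  assumes "ant_dynamics E s d l \<delta> fs bd p f b" "u \<in> verts E" "u \<noteq> d" "{z. (u, z) \<in> E} = {w}"
  shows "b (Suc t) u = (1 - l u) * bedge E (p t) (b t) u w"
  using assms unfolding ant_dynamics_def by simp

lemma backward_flow_along_chain:
  assumes dyn: "ant_dynamics E s d l \<delta> fs bd p f b"
    and pos: "\<And>t u v. (u, v) \<in> E \<Longrightarrow> p t u v \<noteq> 0"
    and edge: "\<And>j. j < K \<Longrightarrow> (q j, q (Suc j)) \<in> E"
    and inner: "\<And>j. 0 < j \<Longrightarrow> j < K \<Longrightarrow>
      q j \<noteq> d \<and> {z. (q j, z) \<in> E} = {q (Suc j)} \<and> {z. (z, q j) \<in> E} = {q (j - 1)}"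
    and "0 < K"
  shows "bedge E (p (t + (K - 1))) (b (t + (K - 1))) (q 0) (q 1)
    = (\<Prod>j\<in>{0<..<K}. 1 - l (q j)) * bedge E (p t) (b t) (q (K - 1)) (q K)"
  using \<open>0 < K\<close> edge inner
proof (induction K arbitrary: q rule: nat_induct_non_zero)
  case 1
  have "{0<..<Suc 0} = ({} :: nat set)" by auto
  then show ?case by simp
next
  case (Suc K)
  have IH: "bedge E (p (t + (K - 1))) (b (t + (K - 1))) (q 1) (q 2)
      = (\<Prod>j\<in>{0<..<K}. 1 - l (q (Suc j))) * bedge E (p t) (b t) (q K) (q (Suc K))"
    using Suc.IH[of "q \<circ> Suc"] Suc.prems Suc.hyps by (simp add: numeral_2_eq_2)
  have q1: "q 1 \<noteq> d" "{z. (q 1, z) \<in> E} = {q 2}" "{z. (z, q 1) \<in> E} = {q 0}"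
    using Suc.prems(2)[of 1] Suc.hyps by (simp_all add: numeral_2_eq_2)
  have "q 1 \<in> verts E"
    using Suc.prems(1)[of 0] unfolding verts_def by force
  then have "b (t + K) (q 1) = (1 - l (q 1)) * bedge E (p (t + (K - 1))) (b (t + (K - 1))) (q 1) (q 2)"
    using backward_flow_single_out[OF dyn _ q1(1,2), of "t + (K - 1)"] Suc.hyps by simp
  moreover have "(\<Prod>j\<in>{0<..<Suc K}. 1 - l (q j)) = (1 - l (q 1)) * (\<Prod>j\<in>{0<..<K}. 1 - l (q (Suc j)))"
  proof -
    have "{0<..<Suc K} = {Suc 0..<Suc K}" "{0<..<K} = {Suc 0..<K}"
      by (simp_all add: atLeastSucLessThan_greaterThanLessThan)
    then show ?thesis
      using Suc.hyps by (simp only: prod.atLeast_Suc_lessThan[of "Suc 0"] prod.shift_bounds_Suc_ivl One_nat_def)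
        (rule prod.atLeast_Suc_lessThan)
  qed
  moreover have "bedge E (p (t + K)) (b (t + K)) (q 0) (q 1) = b (t + K) (q 1)"
    using bedge_single_in[OF q1(3) pos] Suc.prems(1)[of 0] by simp
  ultimately show ?case
    using IH by simp
qed

lemma edge_in_verts: "(u, v) \<in> E \<Longrightarrow> u \<in> verts E \<and> v \<in> verts E"
  unfolding verts_def by force

lemma fedge_nonneg:
  assumes "(u, v) \<in> E" "0 \<le> f u" "\<And>z. (u, z) \<in> E \<Longrightarrow> 0 \<le> p u z"
  shows "0 \<le> fedge E p f u v"
  using assms unfolding fedge_def by (intro divide_nonneg_nonneg mult_nonneg_nonneg sum_nonneg) auto

lemma bedge_bounds:
  assumes "finite {z. (z, v) \<in> E}" "(u, v) \<in> E" "0 \<le> b v" "\<And>z. (z, v) \<in> E \<Longrightarrow> 0 < p z v"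
  shows "0 \<le> bedge E p b u v" and "bedge E p b u v \<le> b v"
proof -
  have "p u v \<le> (\<Sum>z\<in>{z. (z, v) \<in> E}. p z v)"
    using assms by (intro member_le_sum) (auto intro: less_imp_le)
  moreover have "0 < p u v" using assms by simp
  ultimately have "0 \<le> p u v / (\<Sum>z\<in>{z. (z, v) \<in> E}. p z v)" "p u v / (\<Sum>z\<in>{z. (z, v) \<in> E}. p z v) \<le> 1"
    by (simp_all add: divide_le_eq_1)
  moreover have "bedge E p b u v = b v * (p u v / (\<Sum>z\<in>{z. (z, v) \<in> E}. p z v))"
    by (simp add: bedge_def)
  ultimately show "0 \<le> bedge E p b u v" "bedge E p b u v \<le> b v"
    using assms(3) by (metis mult_nonneg_nonneg, metis mult_left_le)
qed

lemma edges2_iff: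
  "(u, v) \<in> edges2 m n \<longleftrightarrow>
    (\<exists>k<m. u = pv1 m k \<and> v = pv1 m (Suc k)) \<or> (\<exists>k<n. u = pv2 n k \<and> v = pv2 n (Suc k))"
  by (auto simp: edges2_def)

lemma pv1_eq_iff [simp]:
  "pv1 m j = Src \<longleftrightarrow> j = 0" "pv1 m j = Dst \<longleftrightarrow> j \<noteq> 0 \<and> j = m"
  "pv1 m j = V1 k \<longleftrightarrow> j = k \<and> k \<noteq> 0 \<and> k \<noteq> m" "pv1 m j \<noteq> V2 k"
  "Src = pv1 m j \<longleftrightarrow> j = 0" "Dst = pv1 m j \<longleftrightarrow> j \<noteq> 0 \<and> j = m"
  "V1 k = pv1 m j \<longleftrightarrow> j = k \<and> k \<noteq> 0 \<and> k \<noteq> m" "V2 k \<noteq> pv1 m j"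
  by (auto simp: pv1_def)

lemma pv2_eq_iff [simp]:
  "pv2 n j = Src \<longleftrightarrow> j = 0" "pv2 n j = Dst \<longleftrightarrow> j \<noteq> 0 \<and> j = n"
  "pv2 n j = V2 k \<longleftrightarrow> j = k \<and> k \<noteq> 0 \<and> k \<noteq> n" "pv2 n j \<noteq> V1 k"
  "Src = pv2 n j \<longleftrightarrow> j = 0" "Dst = pv2 n j \<longleftrightarrow> j \<noteq> 0 \<and> j = n"
  "V2 k = pv2 n j \<longleftrightarrow> j = k \<and> k \<noteq> 0 \<and> k \<noteq> n" "V1 k \<noteq> pv2 n j"
  by (auto simp: pv2_def)

lemma pv1_edge: "k < m \<Longrightarrow> (pv1 m k, pv1 m (Suc k)) \<in> edges2 m n"
  and pv2_edge: "k < n \<Longrightarrow> (pv2 n k, pv2 n (Suc k)) \<in> edges2 m n"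
  by (auto simp: edges2_def)

lemma finite_edges2: "finite (edges2 m n)"
proof -
  have "edges2 m n = (\<lambda>k. (pv1 m k, pv1 m (Suc k))) ` {..<m} \<union> (\<lambda>k. (pv2 n k, pv2 n (Suc k))) ` {..<n}"
    by (auto simp: edges2_def)
  then show ?thesis by simp
qed

lemma edges2_no_out_Dst: "(Dst, z) \<notin> edges2 m n"
  and edges2_no_in_Src: "(z, Src) \<notin> edges2 m n"
  by (auto simp: edges2_iff)

lemma edges2_out_Src: "1 \<le> m \<Longrightarrow> 1 \<le> n \<Longrightarrow> {z. (Src, z) \<in> edges2 m n} = {pv1 m 1, pv2 n 1}"
  by (auto simp: edges2_iff)

lemma edges2_in_Dst:
  assumes "1 \<le> m" "1 \<le> n"
  shows "{z. (z, Dst) \<in> edges2 m n} = {pv1 m (m - 1), pv2 n (n - 1)}"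
proof
  show "{z. (z, Dst) \<in> edges2 m n} \<subseteq> {pv1 m (m - 1), pv2 n (n - 1)}"
    by (auto simp: edges2_iff)
  show "{pv1 m (m - 1), pv2 n (n - 1)} \<subseteq> {z. (z, Dst) \<in> edges2 m n}"
    using pv1_edge[of "m - 1" m n] pv2_edge[of "n - 1" n m] assms by (auto simp: pv1_def pv2_def)
qed

lemma edges2_out_V1: "0 < k \<Longrightarrow> k < m \<Longrightarrow> {z. (V1 k, z) \<in> edges2 m n} = {pv1 m (Suc k)}"
  and edges2_out_V2: "0 < k \<Longrightarrow> k < n \<Longrightarrow> {z. (V2 k, z) \<in> edges2 m n} = {pv2 n (Suc k)}"
  by (auto simp: edges2_iff)

lemma edges2_in_V1: "0 < k \<Longrightarrow> k < m \<Longrightarrow> {z. (z, V1 k) \<in> edges2 m n} = {pv1 m (k - 1)}"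
  by (auto simp: edges2_iff intro!: exI[of _ "k - 1"])

lemma edges2_in_V2: "0 < k \<Longrightarrow> k < n \<Longrightarrow> {z. (z, V2 k) \<in> edges2 m n} = {pv2 n (k - 1)}"
  by (auto simp: edges2_iff intro!: exI[of _ "k - 1"])

lemma verts_edges2_cases:
  assumes "v \<in> verts (edges2 m n)"
  obtains "v = Src" | "v = Dst" | k where "0 < k" "k < m" "v = V1 k" | k where "0 < k" "k < n" "v = V2 k"
proof -
  have "\<exists>j. (j \<le> m \<and> v = pv1 m j) \<or> (j \<le> n \<and> v = pv2 n j)"
    using assms unfolding verts_def by (auto; metis edges2_iff less_imp_le Suc_leI)
  then show ?thesis
    using that by (auto simp: pv1_def pv2_def split: if_splits)
qed

locale two_path_colony =
  fixes m n :: nat and l :: "vtx \<Rightarrow> real" and \<delta> fbar bbar :: real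
    and p :: "nat \<Rightarrow> vtx \<Rightarrow> vtx \<Rightarrow> real" and f b :: "nat \<Rightarrow> vtx \<Rightarrow> real"
  assumes m_pos: "m \<ge> 1" and n_pos: "n \<ge> 1" and not_both_one: "\<not> (m = 1 \<and> n = 1)"
    and \<delta>_pos: "0 < \<delta>" and \<delta>_less_1: "\<delta> < 1"
    and leakage_range: "\<forall>v\<in>verts (edges2 m n). 0 \<le> l v \<and> l v \<le> 1"
    and fbar_pos: "fbar > 0" and bbar_pos: "bbar > 0"
    and dynamics: "ant_dynamics (edges2 m n) Src Dst l \<delta> (\<lambda>_. fbar) (\<lambda>_. bbar) p f b"
    and initial_pheromone_pos: "\<forall>(u, v)\<in>edges2 m n. p 0 u v > 0"
    and initial_flows: "\<forall>v\<in>verts (edges2 m n) - {Src, Dst}.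
      0 \<le> f 0 v \<and> f 0 v \<le> fbar \<and> 0 \<le> b 0 v \<and> b 0 v \<le> bbar"
begin

abbreviation "E \<equiv> edges2 m n"

lemma f_Src: "f t Src = fbar" and b_Dst: "b t Dst = bbar"
  using dynamics unfolding ant_dynamics_def by auto

lemma forward_flow_step:
  "v \<in> verts E \<Longrightarrow> v \<noteq> Src \<Longrightarrow>
    f (Suc t) v = (1 - l v) * (\<Sum>z\<in>{z. (z, v) \<in> E}. fedge E (p t) (f t) z v)"
  using dynamics unfolding ant_dynamics_def by auto

lemma pheromone_step:
  "(u, v) \<in> E \<Longrightarrow>
    p (Suc t) u v = \<delta> * (p t u v + fedge E (p t) (f t) u v + bedge E (p t) (b t) u v)"
  using dynamics unfolding ant_dynamics_def by fastforce

lemma single_out_neighbour: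
  assumes "v \<in> verts E" "v \<noteq> Src" "v \<noteq> Dst"
  obtains w where "{z. (v, z) \<in> E} = {w}"
  using assms by (cases rule: verts_edges2_cases) (auto simp: edges2_out_V1 edges2_out_V2)

definition bounded_state :: "nat \<Rightarrow> bool" where
  "bounded_state t \<longleftrightarrow> (\<forall>u v. (u, v) \<in> E \<longrightarrow> 0 < p t u v) \<and> (\<forall>u\<in>verts E. u \<noteq> Dst \<longrightarrow> 0 \<le> f t u)
    \<and> (\<forall>v\<in>verts E. v \<noteq> Src \<longrightarrow> 0 \<le> b t v \<and> b t v \<le> bbar)"

lemma bounded_state_edge_flows:
  assumes "bounded_state t" "(u, v) \<in> E"
  shows "0 \<le> fedge E (p t) (f t) u v" "0 \<le> bedge E (p t) (b t) u v" "bedge E (p t) (b t) u v \<le> bbar"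
proof -
  have vs: "u \<in> verts E" "v \<in> verts E" "u \<noteq> Dst" "v \<noteq> Src"
    using assms(2) edge_in_verts edges2_no_out_Dst edges2_no_in_Src by blast+
  have fin: "finite {z. (z, v) \<in> E}"
    by (rule finite_subset[OF _ finite_imageI[OF finite_edges2, of fst]]) force
  show "0 \<le> fedge E (p t) (f t) u v"
    using assms vs by (intro fedge_nonneg) (auto simp: bounded_state_def intro: less_imp_le)
  show "0 \<le> bedge E (p t) (b t) u v" "bedge E (p t) (b t) u v \<le> bbar"
    using assms vs bedge_bounds[OF fin assms(2), of "b t" "p t"]
    by (auto simp: bounded_state_def)
qed

lemma bounded_state: "bounded_state t"
proof (induction t)
  case 0
  show ?case
    using initial_pheromone_pos initial_flows f_Src b_Dst fbar_pos bbar_pos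
    by (auto simp: bounded_state_def)
next
  case (Suc t)
  note edge_flows = bounded_state_edge_flows[OF Suc]
  have "0 < p (Suc t) u v" if "(u, v) \<in> E" for u v
  proof -
    have "0 < p t u v" using Suc that by (simp add: bounded_state_def)
    then show ?thesis
      using that edge_flows[OF that] \<delta>_pos by (simp add: pheromone_step add_pos_nonneg)
  qed
  moreover have "0 \<le> f (Suc t) u" if "u \<in> verts E" "u \<noteq> Dst" for u
  proof (cases "u = Src")
    case False
    then show ?thesis
      using that leakage_range edge_flows
      by (auto simp: forward_flow_step intro!: mult_nonneg_nonneg sum_nonneg)
  qed (simp add: f_Src fbar_pos less_imp_le)
  moreover have "0 \<le> b (Suc t) v \<and> b (Suc t) v \<le> bbar" if v: "v \<in> verts E" "v \<noteq> Src" for v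
  proof (cases "v = Dst")
    case False
    then obtain w where w: "{z. (v, z) \<in> E} = {w}"
      using single_out_neighbour v by blast
    then have "(v, w) \<in> E" by auto
    then have "0 \<le> bedge E (p t) (b t) v w" "bedge E (p t) (b t) v w \<le> bbar"
      using edge_flows by auto
    moreover have "0 \<le> 1 - l v" "1 - l v \<le> 1"
      using leakage_range v by auto
    ultimately show ?thesis
      using backward_flow_single_out[OF dynamics v(1) False w]
      by (metis mult_left_le_one_le mult_nonneg_nonneg order_trans)
  qed (simp add: b_Dst bbar_pos less_imp_le)
  ultimately show ?case
    by (auto simp: bounded_state_def)
qed

lemma pheromone_pos: "(u, v) \<in> E \<Longrightarrow> 0 < p t u v"
  using bounded_state by (auto simp: bounded_state_def)

lemma bedge_le_bbar: "(u, v) \<in> E \<Longrightarrow> bedge E (p t) (b t) u v \<le> bbar"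
  using bounded_state_edge_flows[OF bounded_state] by blast

lemma first_vertices_distinct: "pv1 m 1 \<noteq> pv2 n 1"
  and last_vertices_distinct: "pv1 m (m - 1) \<noteq> pv2 n (n - 1)"
  using m_pos n_pos not_both_one by (auto simp: pv1_def pv2_def)

lemma source_edges: "(Src, pv1 m 1) \<in> E" "(Src, pv2 n 1) \<in> E"
  and destination_edges: "(pv1 m (m - 1), Dst) \<in> E" "(pv2 n (n - 1), Dst) \<in> E"
  using pv1_edge[of 0 m n] pv2_edge[of 0 n m] pv1_edge[of "m - 1" m n] pv2_edge[of "n - 1" n m]
    m_pos n_pos by (simp_all add: pv1_def pv2_def)

lemma pheromone_nonzero: "(u, v) \<in> E \<Longrightarrow> p t u v \<noteq> 0"
  using pheromone_pos by (metis less_irrefl)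

definition dst_share1 :: "nat \<Rightarrow> real" where
  "dst_share1 t = p t (pv1 m (m - 1)) Dst / (p t (pv1 m (m - 1)) Dst + p t (pv2 n (n - 1)) Dst)"

definition dst_share2 :: "nat \<Rightarrow> real" where
  "dst_share2 t = p t (pv2 n (n - 1)) Dst / (p t (pv1 m (m - 1)) Dst + p t (pv2 n (n - 1)) Dst)"

lemma forward_flow_Src:
  "fedge E (p t) (f t) Src (pv1 m 1) = fbar * p t Src (pv1 m 1) / (p t Src (pv1 m 1) + p t Src (pv2 n 1))"
  "fedge E (p t) (f t) Src (pv2 n 1) = fbar * p t Src (pv2 n 1) / (p t Src (pv1 m 1) + p t Src (pv2 n 1))"
  unfolding fedge_def edges2_out_Src[OF m_pos n_pos] using first_vertices_distinct f_Src
  by (simp_all add: add.commute)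

lemma backward_flow_Src1:
  assumes "m - 1 \<le> t"
  shows "bedge E (p t) (b t) Src (pv1 m 1) = (1 - leak1 m l) * bbar * dst_share1 (t - (m - 1))"
proof -
  have "bedge E (p t) (b t) (pv1 m 0) (pv1 m 1)
      = (\<Prod>j\<in>{0<..<m}. 1 - l (pv1 m j))
        * bedge E (p (t - (m - 1))) (b (t - (m - 1))) (pv1 m (m - 1)) (pv1 m m)"
  proof -
    have "pv1 m j \<noteq> Dst \<and> {z. (pv1 m j, z) \<in> E} = {pv1 m (Suc j)}
        \<and> {z. (z, pv1 m j) \<in> E} = {pv1 m (j - 1)}" if "0 < j" "j < m" for j
      using that edges2_out_V1 edges2_in_V1 by (simp add: pv1_def)
    from backward_flow_along_chain[OF dynamics pheromone_nonzero pv1_edge this, where K = m and t = "t - (m - 1)"]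
    show ?thesis
      using assms m_pos by simp
  qed
  also have "(\<Prod>j\<in>{0<..<m}. 1 - l (pv1 m j)) = 1 - leak1 m l"
    unfolding leak1_def by (auto simp: pv1_def intro!: prod.cong)
  also have "bedge E (p (t - (m - 1))) (b (t - (m - 1))) (pv1 m (m - 1)) (pv1 m m)
      = bbar * dst_share1 (t - (m - 1))"
    using m_pos last_vertices_distinct b_Dst
    by (simp add: bedge_def dst_share1_def edges2_in_Dst[OF m_pos n_pos] pv1_def[of m m])
  finally show ?thesis by (simp add: pv1_def mult.assoc)
qed

lemma backward_flow_Src2:
  assumes "n - 1 \<le> t"
  shows "bedge E (p t) (b t) Src (pv2 n 1) = (1 - leak2 n l) * bbar * dst_share2 (t - (n - 1))"
proof -
  have "bedge E (p t) (b t) (pv2 n 0) (pv2 n 1)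
      = (\<Prod>j\<in>{0<..<n}. 1 - l (pv2 n j))
        * bedge E (p (t - (n - 1))) (b (t - (n - 1))) (pv2 n (n - 1)) (pv2 n n)"
  proof -
    have "pv2 n j \<noteq> Dst \<and> {z. (pv2 n j, z) \<in> E} = {pv2 n (Suc j)}
        \<and> {z. (z, pv2 n j) \<in> E} = {pv2 n (j - 1)}" if "0 < j" "j < n" for j
      using that edges2_out_V2 edges2_in_V2 by (simp add: pv2_def)
    from backward_flow_along_chain[OF dynamics pheromone_nonzero pv2_edge this, where K = n and t = "t - (n - 1)"]
    show ?thesis
      using assms n_pos by simp
  qed
  also have "(\<Prod>j\<in>{0<..<n}. 1 - l (pv2 n j)) = 1 - leak2 n l"
    unfolding leak2_def by (auto simp: pv2_def intro!: prod.cong)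
  also have "bedge E (p (t - (n - 1))) (b (t - (n - 1))) (pv2 n (n - 1)) (pv2 n n)
      = bbar * dst_share2 (t - (n - 1))"
    using n_pos last_vertices_distinct b_Dst
    by (simp add: bedge_def dst_share2_def edges2_in_Dst[OF m_pos n_pos] pv2_def[of n n] add.commute)
  finally show ?thesis by (simp add: pv2_def mult.assoc)
qed

lemma source_pheromone_bound:
  "p t Src (pv1 m 1) + p t Src (pv2 n 1)
    \<le> \<delta> ^ t * (p 0 Src (pv1 m 1) + p 0 Src (pv2 n 1)) + 2 * (fbar + bbar) / (1 - \<delta>)"
proof (rule geometric_recurrence_bound[where x = "\<lambda>t. p t Src (pv1 m 1) + p t Src (pv2 n 1)"])
  fix t
  have "fedge E (p t) (f t) Src (pv1 m 1) + fedge E (p t) (f t) Src (pv2 n 1) = fbar"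
    using pheromone_pos[OF source_edges(1), of t] pheromone_pos[OF source_edges(2), of t]
    unfolding forward_flow_Src by (simp add: add_divide_distrib[symmetric] ring_distribs(1)[symmetric])
  moreover have "bedge E (p t) (b t) Src (pv1 m 1) \<le> bbar" "bedge E (p t) (b t) Src (pv2 n 1) \<le> bbar"
    using bedge_le_bbar source_edges by blast+
  moreover have "p (Suc t) Src (pv1 m 1) + p (Suc t) Src (pv2 n 1)
      = \<delta> * (p t Src (pv1 m 1) + p t Src (pv2 n 1)
          + (fedge E (p t) (f t) Src (pv1 m 1) + fedge E (p t) (f t) Src (pv2 n 1))
          + bedge E (p t) (b t) Src (pv1 m 1) + bedge E (p t) (b t) Src (pv2 n 1))"
    unfolding pheromone_step[OF source_edges(1)] pheromone_step[OF source_edges(2)]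
    by (simp add: algebra_simps)
  ultimately have "p (Suc t) Src (pv1 m 1) + p (Suc t) Src (pv2 n 1)
      \<le> \<delta> * (p t Src (pv1 m 1) + p t Src (pv2 n 1) + fbar + 2 * bbar)"
    using \<delta>_pos by (simp add: mult_left_mono)
  also have "\<dots> \<le> \<delta> * (p t Src (pv1 m 1) + p t Src (pv2 n 1)) + 2 * (fbar + bbar)"
    using \<delta>_pos \<delta>_less_1 fbar_pos bbar_pos
    by (simp add: ring_distribs) (smt (verit) mult_left_le_one_le)
  finally show "p (Suc t) Src (pv1 m 1) + p (Suc t) Src (pv2 n 1)
      \<le> \<delta> * (p t Src (pv1 m 1) + p t Src (pv2 n 1)) + 2 * (fbar + bbar)" .
qed (use \<delta>_pos \<delta>_less_1 fbar_pos bbar_pos in auto)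

lemma source_budget:
  assumes "\<delta> ^ t * p 0 Src (pv1 m 1) \<le> fbar + bbar" "\<delta> ^ t * p 0 Src (pv2 n 1) \<le> fbar + bbar"
  shows "p t Src (pv1 m 1) + p t Src (pv2 n 1) + fbar \<le> 5 * (fbar + bbar) / (bbar * (1 - \<delta>)) * bbar"
proof -
  define G where "G = (fbar + bbar) / (1 - \<delta>)"
  have "fbar + bbar \<le> G"
    using fbar_pos bbar_pos \<delta>_pos \<delta>_less_1 by (simp add: G_def le_divide_eq)
  moreover have "2 * (fbar + bbar) / (1 - \<delta>) = 2 * G" "5 * (fbar + bbar) / (bbar * (1 - \<delta>)) * bbar = 5 * G"
    using bbar_pos by (simp_all add: G_def)
  ultimately show ?thesis
    using source_pheromone_bound[of t] assms fbar_pos bbar_pos by (simp add: ring_distribs)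
qed

lemma r_min_bounds:
  "0 < r_min m n p t" "r_min m n p t \<le> r_s1 m n p t"
  "r_min m n p t \<le> r_d1 m n p (t - (m - 1))" "r_min m n p t \<le> r_d1 m n p (t - (n - 1))"
proof -
  define Rs where "Rs = (\<lambda>i. r_s1 m n p (t - i)) ` {..<max m n} \<union> (\<lambda>i. r_d1 m n p (t - i)) ` {..<max m n}"
  have r_min_eq: "r_min m n p t = Min Rs" by (simp add: r_min_def Rs_def)
  have fin: "finite Rs" and ne: "Rs \<noteq> {}" using m_pos by (auto simp: Rs_def lessThan_empty_iff)
  have "0 < r" if "r \<in> Rs" for r
    using that pheromone_pos[OF source_edges(1)] pheromone_pos[OF source_edges(2)]
      pheromone_pos[OF destination_edges(1)] pheromone_pos[OF destination_edges(2)]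
    by (auto simp: Rs_def r_s1_def r_d1_def)
  then show "0 < r_min m n p t"
    using Min_in[OF fin ne] r_min_eq by simp
  show "r_min m n p t \<le> r_s1 m n p t"
    unfolding r_min_eq Rs_def using fin m_pos
    by (intro Min_le UnI1 rev_image_eqI[of 0]) (auto simp: Rs_def)
  show "r_min m n p t \<le> r_d1 m n p (t - (m - 1))"
    unfolding r_min_eq Rs_def using fin m_pos
    by (intro Min_le UnI2 rev_image_eqI[of "m - 1"]) (auto simp: Rs_def)
  show "r_min m n p t \<le> r_d1 m n p (t - (n - 1))"
    unfolding r_min_eq Rs_def using fin n_pos
    by (intro Min_le UnI2 rev_image_eqI[of "n - 1"]) (auto simp: Rs_def)
qed

lemma r_s1_Suc:
  assumes "max m n \<le> t + 1"
  shows "r_s1 m n p (t + 1)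
    = (p t Src (pv1 m 1) + fbar * p t Src (pv1 m 1) / (p t Src (pv1 m 1) + p t Src (pv2 n 1))
        + (1 - leak1 m l) * bbar * dst_share1 (t - (m - 1)))
      / (p t Src (pv2 n 1) + fbar * p t Src (pv2 n 1) / (p t Src (pv1 m 1) + p t Src (pv2 n 1))
        + (1 - leak2 n l) * bbar * dst_share2 (t - (n - 1)))"
proof -
  have t_bounds: "m - 1 \<le> t" "n - 1 \<le> t" using assms by auto
  show ?thesis
    unfolding r_s1_def Suc_eq_plus1[symmetric] pheromone_step[OF source_edges(1)]
      pheromone_step[OF source_edges(2)] forward_flow_Src
      backward_flow_Src1[OF t_bounds(1)] backward_flow_Src2[OF t_bounds(2)]
    using \<delta>_pos by simp
qed

lemma one_minus_leak2_nonneg: "0 \<le> 1 - leak2 n l"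
proof -
  have "0 \<le> 1 - l (V2 k)" if "k \<in> {0<..<n}" for k
  proof -
    have "V2 k \<in> verts E"
      using edge_in_verts[OF pv2_edge[of k n m]] that by (simp add: pv2_def)
    then show ?thesis using leakage_range by auto
  qed
  then show ?thesis
    unfolding leak2_def by (auto intro: prod_nonneg)
qed

theorem potential_growth:
  assumes "max m n \<le> t + 1" "leak1 m l < leak2 n l"
    and "\<delta> ^ t * p 0 Src (pv1 m 1) \<le> fbar + bbar" "\<delta> ^ t * p 0 Src (pv2 n 1) \<le> fbar + bbar"
  shows "r_s1 m n p (t + 1) \<ge> r_min m n p t *
           (1 + ((1 - leak1 m l) - (1 - leak2 n l))
                / (5 * (fbar + bbar) / (bbar * (1 - \<delta>)) + (1 - leak2 n l)))"
proof -
  define R where "R = r_min m n p t"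
  note bounds = r_min_bounds[of t, folded R_def]
  note pos = pheromone_pos[OF source_edges(1), of t] pheromone_pos[OF source_edges(2), of t]
    pheromone_pos[OF destination_edges(1)] pheromone_pos[OF destination_edges(2)]
  have ratio_s: "R * p t Src (pv2 n 1) \<le> p t Src (pv1 m 1)"
    using bounds(2) pos by (simp add: r_s1_def pos_le_divide_eq)
  have share1: "R / (1 + R) \<le> dst_share1 (t - (m - 1))"
    using share_bounds_of_ratio_ge(1)[OF pos(3,4) bounds(1,3)[unfolded r_d1_def]]
    by (simp add: dst_share1_def)
  have share2: "0 \<le> dst_share2 (t - (n - 1))" "dst_share2 (t - (n - 1)) \<le> 1 / (1 + R)"
    using share_bounds_of_ratio_ge(2)[OF pos(3,4) bounds(1,4)[unfolded r_d1_def]] pos(3,4)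
    by (simp_all add: dst_share2_def add_pos_pos less_imp_le)
  have "1 - leak2 n l < 1 - leak1 m l" using assms(2) by simp
  from pheromone_ratio_gain[OF pos(1,2) bounds(1) ratio_s share1 share2 fbar_pos bbar_pos
      one_minus_leak2_nonneg this source_budget[OF assms(3,4)]]
  show ?thesis
    unfolding r_s1_Suc[OF assms(1)] R_def[symmetric] by simp
qed

end

theorem mainTheorem10:
  fixes m n :: nat and l :: "vtx \<Rightarrow> real" and \<delta> fbar bbar :: real
    and p :: "nat \<Rightarrow> vtx \<Rightarrow> vtx \<Rightarrow> real" and f b :: "nat \<Rightarrow> vtx \<Rightarrow> real" and t :: nat
  assumes "m \<ge> 1" and "n \<ge> 1" and "\<not> (m = 1 \<and> n = 1)"
    and "0 < \<delta>" and "\<delta> < 1"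
    and "\<forall>v\<in>verts (edges2 m n). 0 \<le> l v \<and> l v \<le> 1"
    and "fbar > 0" and "bbar > 0"
    and "ant_dynamics (edges2 m n) Src Dst l \<delta> (\<lambda>_. fbar) (\<lambda>_. bbar) p f b"
    and "\<forall>(u, v)\<in>edges2 m n. p 0 u v > 0"
    and "\<forall>v\<in>verts (edges2 m n) - {Src, Dst}. 0 \<le> f 0 v \<and> f 0 v \<le> fbar \<and> 0 \<le> b 0 v \<and> b 0 v \<le> bbar"
    and "leak1 m l < leak2 n l"
    and "real t \<ge> real (max m n) + max 0
           (Max ((\<lambda>(u, v). ln (p 0 u v / (fbar + bbar)) / ln (1 / \<delta>)) ` edges2 m n))"
  shows "r_s1 m n p (t + 1) \<ge> r_min m n p t *
           (1 + ((1 - leak1 m l) - (1 - leak2 n l))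
                / (5 * (fbar + bbar) / (bbar * (1 - \<delta>)) + (1 - leak2 n l)))"
proof -
  interpret two_path_colony m n l \<delta> fbar bbar p f b
    using assms(1-11) by unfold_locales
  have decayed: "\<delta> ^ t * p 0 u v \<le> fbar + bbar" if "(u, v) \<in> E" for u v
  proof (rule power_mult_le_of_log_bound)
    have "ln (p 0 u v / (fbar + bbar)) / ln (1 / \<delta>)
        \<le> Max ((\<lambda>(u, v). ln (p 0 u v / (fbar + bbar)) / ln (1 / \<delta>)) ` E)"
      using that finite_edges2 by (intro Max_ge) force+
    then show "ln (p 0 u v / (fbar + bbar)) / ln (1 / \<delta>) \<le> real t"
      using assms(13) by linarith
  qed (use assms that in auto)
  have "max m n \<le> t + 1"
    using assms(13) by linarith
  from potential_growth[OF this assms(12) decayed[OF source_edges(1)] decayed[OF source_edges(2)]]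
  show ?thesis .
qed

end
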